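(* $(M_t)_{t\ge0}$ is a martingale with respect to the natural filtration of the branching process. The limit $M_\star=\lim_{t\to\infty}M_t$ exists almost surely and in $L^2$, and for all $t\in\mathbb N$, $$\mathbf E\big[(M_\star-M_t)^2\big]=\frac{n(\gamma-1)\varrho^t}{m(1-\varrho)}.$$
   Context: Let $(d_i^-)_{1\le i\le n}$, $(d_i^+)_{1\le i\le n}$ be positive integers with $\sum_id_i^-=\sum_id_i^+=m$ and $\min_i\min(d_i^+,d_i^-)\ge2$; $V=\{1,\dots,n\}$. Let $\varrho=\frac1m\sum_i\frac{d_i^-}{d_i^+}$ and $\gamma=\frac1m\sum_i\frac{(d_i^-)^2}{d_i^+}$. Branching process $\mathcal T_\star$: the root $o$ (generation $0$) has mark uniform on $V$; each node $x$ of generation $t$, with mark $i(x)$, independently has exactly $d^-_{i(x)}$ children forming generation $t+1$, whose marks are i.i.d. with the out-degree distribution $\mathbf P(\text{mark}=i)=d_i^+/m$. For a node $x$ of generation $t$ with path $x=x_0,\dots,x_t=o$ to the root, $\mathbf w(x)=\frac{n d^-_{i(x_0)}}{m}\prod_{k=0}^{t-1}\frac1{d^+_{i(x_k)}}$ (empty product $=1$), and $M_t=\sum_{x\text{ in generation }t}\mathbf w(x)$. *)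

theory Defs
  imports "HOL-Probability.Probability"
begin

text \<open>Branching process encoded with Ulam--Harris labels: a potential node is a list
  xs of naturals (the root is the empty list; the children of xs are xs @ [k]).
  mk xs w is the mark of the potential node xs.  The path from xs (generation length xs) to the root is
  take (length xs) xs, ..., take 1 xs, take 0 xs = [].\<close>

definition in_tree :: "(nat \<Rightarrow> nat) \<Rightarrow> (nat list \<Rightarrow> 'a \<Rightarrow> nat) \<Rightarrow> nat list \<Rightarrow> 'a \<Rightarrow> bool" where
  "in_tree din mk xs w \<longleftrightarrow> (\<forall>j<length xs. xs ! j < din (mk (take j xs) w))"

definition generation :: "(nat \<Rightarrow> nat) \<Rightarrow> (nat list \<Rightarrow> 'a \<Rightarrow> nat) \<Rightarrow> nat \<Rightarrow> 'a \<Rightarrow> nat list set" where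
  "generation din mk t w = {xs. length xs = t \<and> in_tree din mk xs w}"

text \<open>weight w(x) = n d^-_{i(x_0)}/m * prod_{k=0}^{t-1} 1/d^+_{i(x_k)}, where x_k = take (t-k) xs\<close>
definition weight :: "nat \<Rightarrow> nat \<Rightarrow> (nat \<Rightarrow> nat) \<Rightarrow> (nat \<Rightarrow> nat) \<Rightarrow> (nat list \<Rightarrow> 'a \<Rightarrow> nat)
    \<Rightarrow> nat list \<Rightarrow> 'a \<Rightarrow> real" where
  "weight n m din dout mk xs w =
     real n * real (din (mk xs w)) / real m * (\<Prod>j\<in>{1..length xs}. 1 / real (dout (mk (take j xs) w)))"

definition Mproc :: "nat \<Rightarrow> nat \<Rightarrow> (nat \<Rightarrow> nat) \<Rightarrow> (nat \<Rightarrow> nat) \<Rightarrow> (nat list \<Rightarrow> 'a \<Rightarrow> nat)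
    \<Rightarrow> nat \<Rightarrow> 'a \<Rightarrow> real" where
  "Mproc n m din dout mk t w = (\<Sum>xs\<in>generation din mk t w. weight n m din dout mk xs w)"

definition obs :: "(nat \<Rightarrow> nat) \<Rightarrow> (nat list \<Rightarrow> 'a \<Rightarrow> nat) \<Rightarrow> nat \<Rightarrow> nat list \<Rightarrow> 'a \<Rightarrow> nat option" where
  "obs din mk t xs w = (if length xs \<le> t \<and> in_tree din mk xs w then Some (mk xs w) else None)"

definition nat_filtration :: "'a measure \<Rightarrow> (nat \<Rightarrow> nat) \<Rightarrow> (nat list \<Rightarrow> 'a \<Rightarrow> nat) \<Rightarrow> nat \<Rightarrow> 'a measure" where
  "nat_filtration M din mk t =
     sigma (space M) {{w \<in> space M. obs din mk t xs w = v} | xs v. True}"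

definition martingale :: "'a measure \<Rightarrow> (nat \<Rightarrow> 'a measure) \<Rightarrow> (nat \<Rightarrow> 'a \<Rightarrow> real) \<Rightarrow> bool" where
  "martingale M F X \<longleftrightarrow>
     (\<forall>t. subalgebra M (F t)) \<and>
     (\<forall>s t. s \<le> t \<longrightarrow> sets (F s) \<subseteq> sets (F t)) \<and>
     (\<forall>t. X t \<in> borel_measurable (F t)) \<and>
     (\<forall>t. integrable M (X t)) \<and>
     (\<forall>s t. s \<le> t \<longrightarrow> (AE w in M. real_cond_exp M (F s) (X t) w = X s w))"

end

theory Submission
  imports Defs
begin

text \<open>A child slot of a node \<open>x\<close> carries the parent's weight divided by the out-degree of the
  child's mark, which is drawn afresh with law \<open>d\<^sup>+/m\<close>; the mean of \<open>d\<^sup>-/d\<^sup>+\<close> under this law is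
  \<open>1\<close>, so every increment \<open>M\<^sub>t\<^sub>+\<^sub>1 - M\<^sub>t\<close> is a sum of centred terms that are independent of
  the first \<open>t\<close> generations.  This gives the martingale property, and also orthogonality of the
  terms, so \<open>E (M\<^sub>t\<^sub>+\<^sub>1 - M\<^sub>t)\<^sup>2 = (\<gamma> - 1) Q\<^sub>t\<close> with \<open>Q\<^sub>t\<close> the expected sum of squared
  weights over the child slots; the same computation with \<open>d\<^sup>-/(d\<^sup>+)\<^sup>2\<close> gives
  \<open>Q\<^sub>t\<^sub>+\<^sub>1 = \<rho> Q\<^sub>t\<close>.  Since \<open>\<rho> \<le> 1/2\<close>, the increments are summable in \<open>L\<^sup>2\<close> and hence almost surely,
  and the orthogonal increments sum to the stated geometric tail.\<close>

section \<open>Square integrals of random sequences\<close>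

lemma weighted_square_le:
  fixes a b e :: real
  assumes "0 < e"
  shows "(1 - e) * a^2 + (1 - 1 / e) * b^2 \<le> (a + b)^2"
proof -
  have "(a + b)^2 - ((1 - e) * a^2 + (1 - 1 / e) * b^2) = (e * a + b)^2 / e"
    using assms by (simp add: field_simps power2_eq_square)
  moreover have "0 \<le> (e * a + b)^2 / e" using assms by simp
  ultimately show ?thesis by simp
qed

lemma convergent_of_summable_abs_diff:
  fixes x :: "nat \<Rightarrow> real"
  assumes "summable (\<lambda>t. \<bar>x (Suc t) - x t\<bar>)"
  shows "convergent x"
proof -
  have "(\<lambda>t. \<Sum>s<t. x (Suc s) - x s) \<longlonglongrightarrow> (\<Sum>s. x (Suc s) - x s)"
    using summable_LIMSEQ[OF summable_rabs_cancel[OF assms]] .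
  then have "(\<lambda>t. x 0 + (\<Sum>s<t. x (Suc s) - x s)) \<longlonglongrightarrow> x 0 + (\<Sum>s. x (Suc s) - x s)"
    by (intro tendsto_add tendsto_const)
  then show ?thesis by (auto simp: convergent_def sum_lessThan_telescope)
qed

lemma integral_sum_sum:
  fixes f :: "'i \<Rightarrow> 'j \<Rightarrow> 'a \<Rightarrow> real"
  assumes "finite A" "finite B" "\<And>a b. a \<in> A \<Longrightarrow> b \<in> B \<Longrightarrow> integrable M (f a b)"
  shows "(\<integral>w. (\<Sum>a\<in>A. \<Sum>b\<in>B. f a b w) \<partial>M) = (\<Sum>a\<in>A. \<Sum>b\<in>B. \<integral>w. f a b w \<partial>M)"
  using assms by (simp add: Bochner_Integration.integral_sum integrable_sum)

context prob_space
begin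

lemma integrable_mult_of_bounded:
  fixes f g :: "'a \<Rightarrow> real"
  assumes "f \<in> borel_measurable M" "AE w in M. \<bar>f w\<bar> \<le> A"
    and "g \<in> borel_measurable M" "AE w in M. \<bar>g w\<bar> \<le> B"
  shows "integrable M (\<lambda>w. f w * g w)"
proof (rule integrable_const_bound[where B="A * B"])
  show "AE w in M. norm (f w * g w) \<le> A * B"
    using assms(2,4) by eventually_elim (auto simp: abs_mult intro: mult_mono)
qed (use assms in measurable)

lemma integrable_square_of_square_diff:
  fixes f g :: "'a \<Rightarrow> real"
  assumes "f \<in> borel_measurable M"
    and "integrable M (\<lambda>w. (f w - g w)^2)" "integrable M (\<lambda>w. (g w)^2)"
  shows "integrable M (\<lambda>w. (f w)^2)"
proof (rule Bochner_Integration.integrable_bound)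
  show "integrable M (\<lambda>w. 2 * (f w - g w)^2 + 2 * (g w)^2)"
    using assms(2,3) by simp
  show "AE w in M. norm ((f w)^2) \<le> norm (2 * (f w - g w)^2 + 2 * (g w)^2)"
  proof (intro AE_I2)
    fix w
    have "(f w)^2 \<le> 2 * (f w - g w)^2 + 2 * (g w)^2"
      using sum_squares_ge_zero[of "f w - 2 * g w" 0] by (simp add: power2_eq_square algebra_simps)
    then show "norm ((f w)^2) \<le> norm (2 * (f w - g w)^2 + 2 * (g w)^2)" by simp
  qed
qed (use assms(1) in measurable)

lemma integral_square_sum_orthogonal:
  fixes a :: "'i \<Rightarrow> 'a \<Rightarrow> real"
  assumes P: "finite P"
    and int: "\<And>p r. p \<in> P \<Longrightarrow> r \<in> P \<Longrightarrow> integrable M (\<lambda>w. a p w * a r w)"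
    and orth: "\<And>p r. p \<in> P \<Longrightarrow> r \<in> P \<Longrightarrow> p \<noteq> r \<Longrightarrow> (\<integral>w. a p w * a r w \<partial>M) = 0"
  shows "(\<integral>w. (\<Sum>p\<in>P. a p w)^2 \<partial>M) = (\<Sum>p\<in>P. \<integral>w. (a p w)^2 \<partial>M)"
proof -
  have "(\<integral>w. (\<Sum>p\<in>P. a p w)^2 \<partial>M) = (\<integral>w. (\<Sum>p\<in>P. \<Sum>r\<in>P. a p w * a r w) \<partial>M)"
    by (simp add: power2_eq_square sum_product)
  also have "\<dots> = (\<Sum>p\<in>P. \<Sum>r\<in>P. \<integral>w. a p w * a r w \<partial>M)"
    using int by (simp add: Bochner_Integration.integral_sum integrable_sum)
  also have "\<dots> = (\<Sum>p\<in>P. \<integral>w. a p w * a p w \<partial>M)"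
  proof (rule sum.cong[OF refl])
    fix p assume "p \<in> P"
    then have "(\<Sum>r\<in>P. \<integral>w. a p w * a r w \<partial>M) = (\<Sum>r\<in>P. if r = p then \<integral>w. a p w * a p w \<partial>M else 0)"
      using orth by (intro sum.cong) auto
    then show "(\<Sum>r\<in>P. \<integral>w. a p w * a r w \<partial>M) = (\<integral>w. a p w * a p w \<partial>M)"
      using \<open>p \<in> P\<close> P by (simp add: sum.delta')
  qed
  finally show ?thesis by (simp add: power2_eq_square)
qed

lemma nn_integral_abs_le_square_integral:
  fixes X :: "'a \<Rightarrow> real"
  assumes int: "integrable M (\<lambda>w. (X w)^2)" and a: "0 < a"
  shows "(\<integral>\<^sup>+ w. ennreal \<bar>X w\<bar> \<partial>M) \<le> ennreal (((\<integral>w. (X w)^2 \<partial>M) / a + a) / 2)"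
proof -
  have am_gm: "\<bar>x\<bar> \<le> (x^2 / a + a) / 2" for x :: real
  proof -
    have "2 * a * \<bar>x\<bar> \<le> x^2 + a^2"
      using sum_squares_ge_zero[of "\<bar>x\<bar> - a" 0] by (simp add: power2_eq_square algebra_simps)
    then show ?thesis using a by (simp add: field_simps power2_eq_square)
  qed
  have "(\<integral>\<^sup>+ w. ennreal \<bar>X w\<bar> \<partial>M) \<le> (\<integral>\<^sup>+ w. ennreal (((X w)^2 / a + a) / 2) \<partial>M)"
    by (intro nn_integral_mono ennreal_leI am_gm)
  also have "\<dots> = ennreal (\<integral>w. ((X w)^2 / a + a) / 2 \<partial>M)"
    using int a by (intro nn_integral_eq_integral) auto
  also have "\<dots> = ennreal (((\<integral>w. (X w)^2 \<partial>M) / a + a) / 2)"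
    using int by (simp add: prob_space)
  finally show ?thesis .
qed

lemma AE_summable_abs_of_geometric_square_integrals:
  fixes D :: "nat \<Rightarrow> 'a \<Rightarrow> real"
  assumes meas: "\<And>t. D t \<in> borel_measurable M"
    and sq_int: "\<And>t. integrable M (\<lambda>w. (D t w)^2)"
    and bound: "\<And>t. (\<integral>w. (D t w)^2 \<partial>M) \<le> C * r ^ t"
    and r: "0 < r" "r < 1"
  shows "AE w in M. summable (\<lambda>t. \<bar>D t w\<bar>)"
proof -
  define s where "s = sqrt r"
  have s: "0 < s" "s < 1" using r by (auto simp: s_def)
  have "0 \<le> (\<integral>w. (D 0 w)^2 \<partial>M)" by (rule integral_nonneg_AE) simp
  then have "C \<ge> 0" using bound[of 0] by (metis mult.right_neutral order_trans power_0)
  \<comment> \<open>choosing \<open>a = s\<^sup>t\<close> balances the two terms of the bound\<close>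
  have L1: "(\<integral>\<^sup>+ w. ennreal \<bar>D t w\<bar> \<partial>M) \<le> ennreal ((C + 1) / 2 * s ^ t)" for t
  proof -
    have st: "0 < s ^ t" "r ^ t = s ^ t * s ^ t"
      using s r by (simp_all add: s_def power_mult_distrib[symmetric])
    have "(\<integral>\<^sup>+ w. ennreal \<bar>D t w\<bar> \<partial>M) \<le> ennreal (((\<integral>w. (D t w)^2 \<partial>M) / s ^ t + s ^ t) / 2)"
      by (rule nn_integral_abs_le_square_integral[OF sq_int st(1)])
    also have "\<dots> \<le> ennreal ((C * r ^ t / s ^ t + s ^ t) / 2)"
      using bound[of t] st by (intro ennreal_leI divide_right_mono add_right_mono) simp_all
    also have "C * r ^ t / s ^ t = C * s ^ t" using st by simp
    finally show ?thesis by (simp add: algebra_simps add_divide_distrib)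
  qed
  have meas': "\<And>t. (\<lambda>w. ennreal \<bar>D t w\<bar>) \<in> borel_measurable M" using meas by measurable
  have "(\<integral>\<^sup>+ w. (\<Sum>t. ennreal \<bar>D t w\<bar>) \<partial>M) = (\<Sum>t. \<integral>\<^sup>+ w. ennreal \<bar>D t w\<bar> \<partial>M)"
    by (rule nn_integral_suminf[OF meas'])
  also have "\<dots> \<le> (\<Sum>t. ennreal ((C + 1) / 2 * s ^ t))"
    by (intro suminf_le L1) auto
  also have "\<dots> = ennreal (\<Sum>t. (C + 1) / 2 * s ^ t)"
    using \<open>C \<ge> 0\<close> s by (intro suminf_ennreal2 summable_mult summable_geometric) auto
  finally have "(\<integral>\<^sup>+ w. (\<Sum>t. ennreal \<bar>D t w\<bar>) \<partial>M) \<noteq> \<infinity>"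
    by (auto simp: top_unique)
  then have "AE w in M. (\<Sum>t. ennreal \<bar>D t w\<bar>) \<noteq> \<infinity>"
    by (intro nn_integral_noteq_infinite) (use meas' in measurable)
  then show ?thesis
    by eventually_elim (rule summable_suminf_not_top, auto)
qed

lemma nn_integral_square_limit_le:
  fixes X :: "nat \<Rightarrow> 'a \<Rightarrow> real" and L :: "'a \<Rightarrow> real"
  assumes meas: "\<And>t. X t \<in> borel_measurable M"
    and conv: "AE w in M. (\<lambda>T. X T w) \<longlonglongrightarrow> L w"
    and int: "\<And>T. integrable M (\<lambda>w. (X T w - X t w)^2)"
    and bound: "\<And>T. t \<le> T \<Longrightarrow> (\<integral>w. (X T w - X t w)^2 \<partial>M) \<le> B"
  shows "(\<integral>\<^sup>+ w. ennreal ((L w - X t w)^2) \<partial>M) \<le> ennreal B"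
proof -
  have "(\<integral>\<^sup>+ w. ennreal ((L w - X t w)^2) \<partial>M) =
        (\<integral>\<^sup>+ w. liminf (\<lambda>T. ennreal ((X T w - X t w)^2)) \<partial>M)"
  proof (rule nn_integral_cong_AE)
    show "AE w in M. ennreal ((L w - X t w)^2) = liminf (\<lambda>T. ennreal ((X T w - X t w)^2))"
      using conv
    proof eventually_elim
      case (elim w)
      have "(\<lambda>T. ennreal ((X T w - X t w)^2)) \<longlonglongrightarrow> ennreal ((L w - X t w)^2)"
        by (intro tendsto_ennrealI tendsto_power tendsto_diff elim tendsto_const)
      from lim_imp_Liminf[OF trivial_limit_sequentially this] show ?case by simp
    qed
  qed
  also have "\<dots> \<le> liminf (\<lambda>T. \<integral>\<^sup>+ w. ennreal ((X T w - X t w)^2) \<partial>M)"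
    by (rule nn_integral_liminf) (use meas in measurable)
  also have "\<dots> \<le> ennreal B"
  proof (rule Liminf_le)
    show "\<forall>\<^sub>F T in sequentially. (\<integral>\<^sup>+ w. ennreal ((X T w - X t w)^2) \<partial>M) \<le> ennreal B"
    proof (rule eventually_sequentiallyI[of t])
      fix T assume "t \<le> T"
      then show "(\<integral>\<^sup>+ w. ennreal ((X T w - X t w)^2) \<partial>M) \<le> ennreal B"
        using bound by (simp add: nn_integral_eq_integral[OF int] ennreal_leI)
    qed
  qed simp
  finally show ?thesis .
qed

lemma square_integral_limit_le:
  fixes X :: "nat \<Rightarrow> 'a \<Rightarrow> real" and L :: "'a \<Rightarrow> real"
  assumes meas: "\<And>t. X t \<in> borel_measurable M" and L_meas: "L \<in> borel_measurable M"
    and conv: "AE w in M. (\<lambda>T. X T w) \<longlonglongrightarrow> L w"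
    and int: "\<And>T. integrable M (\<lambda>w. (X T w - X t w)^2)"
    and bound: "\<And>T. t \<le> T \<Longrightarrow> (\<integral>w. (X T w - X t w)^2 \<partial>M) \<le> B"
  shows "integrable M (\<lambda>w. (L w - X t w)^2)" and "(\<integral>w. (L w - X t w)^2 \<partial>M) \<le> B"
proof -
  have "B \<ge> 0" using bound[of t] by simp
  have sq_meas: "(\<lambda>w. (L w - X t w)^2) \<in> borel_measurable M"
    using meas L_meas by measurable
  note nn_le = nn_integral_square_limit_le[OF meas conv int bound]
  show "integrable M (\<lambda>w. (L w - X t w)^2)"
    using nn_le sq_meas
    by (intro integrableI_nonneg) (auto simp: top_unique less_top[symmetric] intro: le_less_trans)
  have "(\<integral>w. (L w - X t w)^2 \<partial>M) = enn2real (\<integral>\<^sup>+ w. ennreal ((L w - X t w)^2) \<partial>M)"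
    by (rule integral_eq_nn_integral) (use sq_meas in auto)
  also have "\<dots> \<le> B"
    using enn2real_mono[OF nn_le] \<open>B \<ge> 0\<close> by simp
  finally show "(\<integral>w. (L w - X t w)^2 \<partial>M) \<le> B" .
qed

text \<open>Apply \<open>weighted_square_le\<close> to \<open>a = X\<^sub>T - X\<^sub>t\<close>, \<open>b = L - X\<^sub>T\<close>, and let first
  \<open>T \<longrightarrow> \<infinity>\<close>, then \<open>e \<longrightarrow> 0\<close>.\<close>
lemma square_integral_limit_ge:
  fixes X :: "nat \<Rightarrow> 'a \<Rightarrow> real" and L :: "'a \<Rightarrow> real" and R :: "nat \<Rightarrow> real"
  assumes int: "\<And>t T. integrable M (\<lambda>w. (X T w - X t w)^2)"
    and int_L: "\<And>t. integrable M (\<lambda>w. (L w - X t w)^2)"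
    and incr: "\<And>t T. t \<le> T \<Longrightarrow> (\<integral>w. (X T w - X t w)^2 \<partial>M) = R t - R T"
    and upper: "\<And>t. (\<integral>w. (L w - X t w)^2 \<partial>M) \<le> R t"
    and R: "R \<longlonglongrightarrow> 0"
  shows "R t \<le> (\<integral>w. (L w - X t w)^2 \<partial>M)"
proof -
  define I where "I = (\<integral>w. (L w - X t w)^2 \<partial>M)"
  have lower: "(1 - e) * R t \<le> I" if e: "0 < e" "e < 1" for e
  proof (rule LIMSEQ_le_const2)
    show "(\<lambda>T. (1 - e) * (R t - R T) + (1 - 1 / e) * R T) \<longlonglongrightarrow> (1 - e) * R t"
      using tendsto_add[OF tendsto_mult[OF tendsto_const tendsto_diff[OF tendsto_const R]]
          tendsto_mult[OF tendsto_const R], of "1 - e" "R t" "1 - 1/e"] by simp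
    show "\<exists>N. \<forall>T\<ge>N. (1 - e) * (R t - R T) + (1 - 1 / e) * R T \<le> I"
    proof (intro exI allI impI)
      fix T assume "t \<le> T"
      have "(1 - 1 / e) * R T \<le> (1 - 1 / e) * (\<integral>w. (L w - X T w)^2 \<partial>M)"
        using e upper[of T] by (intro mult_left_mono_neg) (auto simp: field_simps)
      then have "(1 - e) * (R t - R T) + (1 - 1 / e) * R T \<le>
          (\<integral>w. (1 - e) * (X T w - X t w)^2 + (1 - 1 / e) * (L w - X T w)^2 \<partial>M)"
        using int[of T t] int_L[of T] by (simp add: incr[OF \<open>t \<le> T\<close>])
      also have "\<dots> \<le> I"
        unfolding I_def using int[of T t] int_L[of T] int_L[of t]
          weighted_square_le[OF e(1), of "X T w - X t w" "L w - X T w" for w]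
        by (intro integral_mono) auto
      finally show "(1 - e) * (R t - R T) + (1 - 1 / e) * R T \<le> I" .
    qed
  qed
  show ?thesis unfolding I_def[symmetric]
  proof (rule ccontr)
    assume "\<not> R t \<le> I"
    moreover have "0 \<le> I" unfolding I_def by (rule integral_nonneg_AE) simp
    ultimately have "(1 - (R t - I) / (2 * R t)) * R t \<le> I"
      by (intro lower) (auto simp: field_simps)
    with \<open>\<not> R t \<le> I\<close> \<open>0 \<le> I\<close> show False by (simp add: field_simps)
  qed
qed

lemma square_integral_limit:
  fixes X :: "nat \<Rightarrow> 'a \<Rightarrow> real" and L :: "'a \<Rightarrow> real" and R :: "nat \<Rightarrow> real"
  assumes meas: "\<And>t. X t \<in> borel_measurable M" and L_meas: "L \<in> borel_measurable M"
    and conv: "AE w in M. (\<lambda>t. X t w) \<longlonglongrightarrow> L w"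
    and int: "\<And>t T. integrable M (\<lambda>w. (X T w - X t w)^2)"
    and incr: "\<And>t T. t \<le> T \<Longrightarrow> (\<integral>w. (X T w - X t w)^2 \<partial>M) = R t - R T"
    and R: "R \<longlonglongrightarrow> 0"
  shows "integrable M (\<lambda>w. (L w - X t w)^2)"
    and "(\<integral>w. (L w - X t w)^2 \<partial>M) = R t"
proof -
  have R_nonneg: "0 \<le> R t" for t
  proof (rule LIMSEQ_le_const2[OF R])
    have "0 \<le> (\<integral>w. (X T w - X t w)^2 \<partial>M)" for T by (rule integral_nonneg_AE) simp
    then show "\<exists>N. \<forall>T\<ge>N. R T \<le> R t" using incr by (metis diff_ge_0_iff_ge)
  qed
  have "(\<integral>w. (X T w - X t w)^2 \<partial>M) \<le> R t" if "t \<le> T" for t T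
    using incr[OF that] R_nonneg[of T] by simp
  note upper = square_integral_limit_le[OF meas L_meas conv int this]
  have int_L: "integrable M (\<lambda>w. (L w - X t w)^2)"
    and le: "(\<integral>w. (L w - X t w)^2 \<partial>M) \<le> R t" for t
    using upper by blast+
  show "integrable M (\<lambda>w. (L w - X t w)^2)" by (rule int_L)
  show "(\<integral>w. (L w - X t w)^2 \<partial>M) = R t"
    using le square_integral_limit_ge[OF int int_L incr le R] by (simp add: antisym)
qed

lemma integral_square_telescope:
  fixes X :: "nat \<Rightarrow> 'a \<Rightarrow> real"
  assumes meas: "\<And>t. X t \<in> borel_measurable M" and bdd: "\<And>t. AE w in M. \<bar>X t w\<bar> \<le> B t"
    and orth: "\<And>t T. t \<le> T \<Longrightarrow> (\<integral>w. (X T w - X t w) * (X (Suc T) w - X T w) \<partial>M) = 0"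
    and "t \<le> T"
  shows "(\<integral>w. (X T w - X t w)^2 \<partial>M) = (\<Sum>s\<in>{t..<T}. \<integral>w. (X (Suc s) w - X s w)^2 \<partial>M)"
  using \<open>t \<le> T\<close>
proof (induction T rule: dec_induct)
  case (step T)
  have int: "integrable M (\<lambda>w. (X T' w - X t' w) * (X S' w - X s' w))" for T' t' S' s'
    using bdd[of T'] bdd[of t'] bdd[of S'] bdd[of s'] meas
    by (intro integrable_mult_of_bounded[where A="B T' + B t'" and B="B S' + B s'"])
       (auto elim: eventually_mono[OF eventually_conj] simp del: eventually_conj_iff)
  have "(\<integral>w. (X (Suc T) w - X t w)^2 \<partial>M) =
        (\<integral>w. (X T w - X t w) * (X T w - X t w) + 2 * ((X T w - X t w) * (X (Suc T) w - X T w))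
              + (X (Suc T) w - X T w) * (X (Suc T) w - X T w) \<partial>M)"
    by (rule Bochner_Integration.integral_cong) (auto simp: power2_eq_square algebra_simps)
  also have "\<dots> = (\<integral>w. (X T w - X t w)^2 \<partial>M) + (\<integral>w. (X (Suc T) w - X T w)^2 \<partial>M)"
    using int orth[OF step.hyps(1)] by (simp add: power2_eq_square)
  finally show ?case using step.IH step.hyps by simp
qed simp

lemma martingaleI_orthogonal_increments:
  fixes X :: "nat \<Rightarrow> 'a \<Rightarrow> real" and F :: "nat \<Rightarrow> 'a measure"
  assumes subalg: "\<And>t. subalgebra M (F t)"
    and mono: "\<And>s t. s \<le> t \<Longrightarrow> sets (F s) \<subseteq> sets (F t)"
    and adapted: "\<And>t. X t \<in> borel_measurable (F t)"
    and int: "\<And>t. integrable M (X t)"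
    and orth: "\<And>t A. A \<in> sets (F t) \<Longrightarrow> (\<integral>w. indicator A w * (X (Suc t) w - X t w) \<partial>M) = 0"
  shows "martingale M F X"
proof -
  have set_integral_eq: "(\<integral>w. indicator A w * X T w \<partial>M) = (\<integral>w. indicator A w * X s w \<partial>M)"
    if "A \<in> sets (F s)" "s \<le> T" for A s T
    using \<open>s \<le> T\<close>
  proof (induction T rule: dec_induct)
    case (step T)
    have A: "A \<in> sets (F T)" "A \<in> sets M"
      using mono[OF step.hyps(1)] that(1) subalg[of T] by (auto simp: subalgebra_def)
    have "(\<integral>w. indicator A w * X (Suc T) w \<partial>M) =
          (\<integral>w. indicator A w * X T w + indicator A w * (X (Suc T) w - X T w) \<partial>M)"
      by (simp add: algebra_simps)
    also have "\<dots> = (\<integral>w. indicator A w * X T w \<partial>M)"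
      using orth[OF A(1)] integrable_real_mult_indicator[OF A(2) int] A(2) int
      by (simp add: right_diff_distrib mult.commute)
    finally show ?case using step.IH by simp
  qed simp
  have cond_exp: "AE w in M. real_cond_exp M (F s) (X t) w = X s w" if "s \<le> t" for s t
  proof -
    interpret F: sigma_finite_subalgebra M "F s"
      using subalg[of s] by (intro finite_measure_subalgebra_is_sigma_finite)
        (simp add: finite_measure_subalgebra_def finite_measure_subalgebra_axioms_def finite_measure_axioms)
    show ?thesis
      using set_integral_eq[OF _ that] int adapted
      by (intro F.real_cond_exp_charact) (auto simp: set_lebesgue_integral_def)
  qed
  show ?thesis
    unfolding martingale_def using subalg mono adapted int cond_exp by blast
qed

end

section \<open>Weighted trees with a fixed marking\<close>

text \<open>A marking \<open>v\<close> stands for the marks \<open>\<lambda>xs. mk xs w\<close> of one outcome \<open>w\<close>.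
  \<open>path_weight v xs\<close> is the weight of \<open>xs\<close> without its factor \<open>d\<^sup>-\<close>: it is what each of the
  \<open>d\<^sup>-\<close> child slots of \<open>xs\<close> inherits.\<close>

locale weighted_tree =
  fixes n m :: nat and din dout :: "nat \<Rightarrow> nat"
begin

definition is_node :: "(nat list \<Rightarrow> nat) \<Rightarrow> nat list \<Rightarrow> bool" where
  "is_node v xs \<longleftrightarrow> (\<forall>j<length xs. xs ! j < din (v (take j xs)))"

definition path_weight :: "(nat list \<Rightarrow> nat) \<Rightarrow> nat list \<Rightarrow> real" where
  "path_weight v xs = real n / real m * (\<Prod>j\<in>{1..length xs}. 1 / real (dout (v (take j xs))))"

definition nodes :: "(nat list \<Rightarrow> nat) \<Rightarrow> nat \<Rightarrow> nat list set" where
  "nodes v t = {xs. length xs = t \<and> is_node v xs}"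

definition mass :: "nat \<Rightarrow> (nat list \<Rightarrow> nat) \<Rightarrow> real" where
  "mass t v = (\<Sum>xs\<in>nodes v t. real (din (v xs)) * path_weight v xs)"

definition sq_mass :: "nat \<Rightarrow> (nat list \<Rightarrow> nat) \<Rightarrow> real" where
  "sq_mass t v = (\<Sum>xs\<in>nodes v t. real (din (v xs)) * (path_weight v xs)^2)"

definition ratio :: "nat \<Rightarrow> real" where "ratio i = real (din i) / real (dout i)"

definition sq_ratio :: "nat \<Rightarrow> real" where "sq_ratio i = real (din i) / real (dout i) ^ 2"

lemma is_node_snoc: "is_node v (xs @ [k]) \<longleftrightarrow> is_node v xs \<and> k < din (v xs)"
  unfolding is_node_def by (auto simp: nth_append less_Suc_eq)

lemma is_node_take: "is_node v xs \<Longrightarrow> is_node v (take j xs)"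
  unfolding is_node_def by auto

lemma path_weight_snoc: "path_weight v (xs @ [k]) = path_weight v xs / real (dout (v (xs @ [k])))"
proof -
  have "(\<Prod>j\<in>{1..length xs}. 1 / real (dout (v (take j (xs @ [k]))))) =
        (\<Prod>j\<in>{1..length xs}. 1 / real (dout (v (take j xs))))"
    by (rule prod.cong) auto
  moreover have "{1..length (xs @ [k])} = insert (Suc (length xs)) {1..length xs}" by auto
  ultimately show ?thesis unfolding path_weight_def by (simp add: field_simps)
qed

lemma path_weight_nonneg: "0 \<le> path_weight v xs"
  unfolding path_weight_def by (intro mult_nonneg_nonneg prod_nonneg) auto

lemma path_weight_le: "path_weight v xs \<le> real n / real m"
proof -
  have "(\<Prod>j\<in>{1..length xs}. 1 / real (dout (v (take j xs)))) \<le> 1"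
    by (rule prod_le_1) (auto simp: divide_le_eq)
  then show ?thesis unfolding path_weight_def by (intro mult_left_le) auto
qed

lemma nodes_0: "nodes v 0 = {[]}"
  by (auto simp: nodes_def is_node_def)

lemma nodes_Suc: "nodes v (Suc t) = (\<lambda>(xs, k). xs @ [k]) ` (SIGMA xs:nodes v t. {..<din (v xs)})"
proof safe
  fix ys assume "ys \<in> nodes v (Suc t)"
  then have l: "length ys = Suc t" and ys: "is_node v ys" by (auto simp: nodes_def)
  obtain xs k where "ys = xs @ [k]" using l by (cases ys rule: rev_cases) auto
  then show "ys \<in> (\<lambda>(xs, k). xs @ [k]) ` (SIGMA xs:nodes v t. {..<din (v xs)})"
    using ys l by (auto simp: is_node_snoc nodes_def intro!: image_eqI[where x="(xs, k)"])
qed (auto simp: nodes_def is_node_snoc)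

lemma finite_nodes: "finite (nodes v t)"
  by (induction t) (auto simp: nodes_0 nodes_Suc)

lemma sum_nodes_Suc:
  "(\<Sum>ys\<in>nodes v (Suc t). f ys) = (\<Sum>xs\<in>nodes v t. \<Sum>k<din (v xs). f (xs @ [k]))"
proof -
  have "inj_on (\<lambda>(xs, k). xs @ [k]) (SIGMA xs:nodes v t. {..<din (v xs)})"
    by (auto simp: inj_on_def)
  then show ?thesis unfolding nodes_Suc
    by (subst sum.reindex) (simp_all add: sum.Sigma finite_nodes split_def)
qed

lemma mass_Suc_diff:
  "mass (Suc t) v - mass t v =
     (\<Sum>xs\<in>nodes v t. \<Sum>k<din (v xs). path_weight v xs * (ratio (v (xs @ [k])) - 1))"
  unfolding mass_def sum_nodes_Suc path_weight_snoc ratio_def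
  by (simp add: right_diff_distrib sum_subtractf field_simps)

lemma sq_mass_Suc:
  "sq_mass (Suc t) v = (\<Sum>xs\<in>nodes v t. \<Sum>k<din (v xs). (path_weight v xs)^2 * sq_ratio (v (xs @ [k])))"
  unfolding sq_mass_def sum_nodes_Suc path_weight_snoc sq_ratio_def
  by (simp add: field_simps power2_eq_square)

lemma is_node_cong:
  "(\<And>ys. length ys < length xs \<Longrightarrow> v ys = v' ys) \<Longrightarrow> is_node v xs = is_node v' xs"
  unfolding is_node_def by auto

lemma path_weight_cong:
  "(\<And>ys. length ys \<le> length xs \<Longrightarrow> v ys = v' ys) \<Longrightarrow> path_weight v xs = path_weight v' xs"
  unfolding path_weight_def by (auto intro!: prod.cong)

lemma mass_cong:
  assumes "\<And>ys. length ys \<le> t \<Longrightarrow> v ys = v' ys"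
  shows "mass t v = mass t v'"
proof -
  have "nodes v t = nodes v' t"
    using assms is_node_cong[of xs v v' for xs] unfolding nodes_def by auto
  then show ?thesis
    unfolding mass_def using assms path_weight_cong[of _ v v'] by (intro sum.cong) (auto simp: nodes_def)
qed

text \<open>This is what makes \<open>mass t\<close> measurable for the natural filtration.\<close>
lemma mass_restrict_tree:
  "mass t (\<lambda>ys. if length ys \<le> t \<and> is_node v ys then v ys else 0) = mass t v"
proof -
  let ?v = "\<lambda>ys. if length ys \<le> t \<and> is_node v ys then v ys else 0"
  have node_iff: "is_node ?v xs \<longleftrightarrow> is_node v xs" if "length xs \<le> t" for xs
  proof
    assume "is_node v xs"
    then have "\<forall>j<length xs. ?v (take j xs) = v (take j xs)"
      using is_node_take[of v xs] that by auto
    then show "is_node ?v xs" using \<open>is_node v xs\<close> unfolding is_node_def by auto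
  next
    assume node: "is_node ?v xs"
    have "is_node v (take j xs)" if "j \<le> length xs" for j
      using that
    proof (induction j)
      case (Suc j)
      then have j: "j < length xs" "is_node v (take j xs)" by auto
      then have "xs ! j < din (?v (take j xs))" using node unfolding is_node_def by auto
      then have "xs ! j < din (v (take j xs))" using j \<open>length xs \<le> t\<close> by auto
      then show ?case using j by (simp add: take_Suc_conv_app_nth is_node_snoc)
    qed (simp add: is_node_def)
    then show "is_node v xs" by (metis order_refl take_all)
  qed
  then have nodes_eq: "nodes ?v t = nodes v t" unfolding nodes_def by auto
  show ?thesis unfolding mass_def nodes_eq
  proof (rule sum.cong[OF refl])
    fix xs assume "xs \<in> nodes v t"
    then have "length xs = t" "is_node v xs" by (auto simp: nodes_def)
    moreover from this have "path_weight ?v xs = path_weight v xs"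
      unfolding path_weight_def using is_node_take[of v xs]
      by (intro arg_cong[where f="\<lambda>x. _ * x"] prod.cong) auto
    ultimately show "real (din (?v xs)) * path_weight ?v xs = real (din (v xs)) * path_weight v xs"
      by simp
  qed
qed

text \<open>When all in-degrees are at most \<open>K\<close>, sums over the child slots of generation \<open>t\<close> can be
  taken over the fixed finite index set \<open>words K t \<times> {..<K}\<close>, with \<open>slot_weight\<close> vanishing on
  slots that are absent.\<close>

definition words :: "nat \<Rightarrow> nat \<Rightarrow> nat list set" where
  "words K t = {xs. length xs = t \<and> set xs \<subseteq> {..<K}}"

definition slot_weight :: "nat list \<Rightarrow> nat \<Rightarrow> (nat list \<Rightarrow> nat) \<Rightarrow> real" where
  "slot_weight xs k v = (if is_node v xs \<and> k < din (v xs) then path_weight v xs else 0)"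

lemma finite_words: "finite (words K t)"
  unfolding words_def using finite_lists_length_eq[of "{..<K}" t] by (simp add: conj_commute)

lemma slot_weight_cong:
  "(\<And>ys. length ys \<le> length xs \<Longrightarrow> v ys = v' ys) \<Longrightarrow> slot_weight xs k v = slot_weight xs k v'"
  using is_node_cong[of xs v v'] path_weight_cong[of xs v v'] unfolding slot_weight_def by auto

lemma abs_slot_weight_le: "\<bar>slot_weight xs k v\<bar> \<le> real n / real m"
  using path_weight_le path_weight_nonneg unfolding slot_weight_def by auto

lemma sum_slots_eq_sum_words:
  assumes K: "\<And>ys. din (v ys) \<le> K"
  shows "(\<Sum>xs\<in>nodes v t. \<Sum>k<din (v xs). f xs k) =
     (\<Sum>xs\<in>words K t. \<Sum>k<K. if is_node v xs \<and> k < din (v xs) then f xs k else 0)"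
proof -
  have "nodes v t \<subseteq> words K t"
    using K by (force simp: nodes_def is_node_def words_def in_set_conv_nth intro: less_le_trans)
  then have "nodes v t = {xs \<in> words K t. is_node v xs}" by (auto simp: nodes_def words_def)
  then have "(\<Sum>xs\<in>nodes v t. \<Sum>k<din (v xs). f xs k) =
      (\<Sum>xs\<in>words K t. if is_node v xs then \<Sum>k<din (v xs). f xs k else 0)"
    by (simp add: sum.inter_filter finite_words)
  also have "\<dots> = (\<Sum>xs\<in>words K t. \<Sum>k<K. if is_node v xs \<and> k < din (v xs) then f xs k else 0)"
  proof (rule sum.cong[OF refl])
    fix xs
    have "{k\<in>{..<K}. k < din (v xs)} = {..<din (v xs)}" using K[of xs] by auto
    then show "(if is_node v xs then \<Sum>k<din (v xs). f xs k else 0) =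
        (\<Sum>k<K. if is_node v xs \<and> k < din (v xs) then f xs k else 0)"
      by (simp add: sum.inter_filter[symmetric])
  qed
  finally show ?thesis .
qed

lemma mass_eq_sum_words:
  assumes "\<And>ys. din (v ys) \<le> K"
  shows "mass t v = (\<Sum>xs\<in>words K t. \<Sum>k<K. slot_weight xs k v)"
proof -
  have "mass t v = (\<Sum>xs\<in>nodes v t. \<Sum>k<din (v xs). path_weight v xs)" by (simp add: mass_def)
  then show ?thesis unfolding sum_slots_eq_sum_words[OF assms] slot_weight_def .
qed

lemma mass_Suc_diff_eq_sum_words:
  "(\<And>ys. din (v ys) \<le> K) \<Longrightarrow> mass (Suc t) v - mass t v =
     (\<Sum>xs\<in>words K t. \<Sum>k<K. slot_weight xs k v * (ratio (v (xs @ [k])) - 1))"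
  unfolding mass_Suc_diff by (subst sum_slots_eq_sum_words) (auto simp: slot_weight_def intro!: sum.cong)

lemma sq_mass_eq_sum_words:
  assumes "\<And>ys. din (v ys) \<le> K"
  shows "sq_mass t v = (\<Sum>xs\<in>words K t. \<Sum>k<K. (slot_weight xs k v)^2)"
proof -
  have "sq_mass t v = (\<Sum>xs\<in>nodes v t. \<Sum>k<din (v xs). (path_weight v xs)^2)" by (simp add: sq_mass_def)
  then show ?thesis unfolding sum_slots_eq_sum_words[OF assms] slot_weight_def by (auto intro!: sum.cong)
qed

lemma sq_mass_Suc_eq_sum_words:
  "(\<And>ys. din (v ys) \<le> K) \<Longrightarrow> sq_mass (Suc t) v =
     (\<Sum>xs\<in>words K t. \<Sum>k<K. (slot_weight xs k v)^2 * sq_ratio (v (xs @ [k])))"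
  unfolding sq_mass_Suc by (subst sum_slots_eq_sum_words) (auto simp: slot_weight_def intro!: sum.cong)

lemma slot_weight_square_le: "(slot_weight xs k v)^2 \<le> (real n / real m)^2"
  using abs_slot_weight_le[of xs k v] by (simp add: abs_le_square_iff[symmetric])

lemma abs_mass_le:
  assumes "\<And>ys. din (v ys) \<le> K"
  shows "\<bar>mass t v\<bar> \<le> real (card (words K t)) * real K * (real n / real m)"
proof -
  have "\<bar>mass t v\<bar> \<le> (\<Sum>xs\<in>words K t. \<Sum>k<K. \<bar>slot_weight xs k v\<bar>)"
    unfolding mass_eq_sum_words[OF assms] by (rule order.trans[OF sum_abs sum_mono[OF sum_abs]])
  also have "\<dots> \<le> (\<Sum>xs\<in>words K t. \<Sum>k<K. real n / real m)"
    by (intro sum_mono abs_slot_weight_le)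
  finally show ?thesis by simp
qed

end

section \<open>Measurability in the marks\<close>

abbreviation marks_space :: "nat list set \<Rightarrow> (nat list \<Rightarrow> nat) measure" where
  "marks_space J \<equiv> PiM J (\<lambda>_. count_space UNIV)"

lemma measurable_mark_fun:
  fixes f :: "nat \<Rightarrow> real"
  shows "ys \<in> J \<Longrightarrow> (\<lambda>v. f (v ys)) \<in> borel_measurable (marks_space J)"
  by (rule measurable_compose[OF measurable_component_singleton]) simp_all

context weighted_tree
begin

lemma path_weight_measurable:
  "{ys. length ys \<le> length xs} \<subseteq> J \<Longrightarrow> (\<lambda>v. path_weight v xs) \<in> borel_measurable (marks_space J)"
  unfolding path_weight_def by (intro borel_measurable_times borel_measurable_const borel_measurable_prod
    measurable_mark_fun) auto

lemma indicator_is_node: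
  "(if is_node v xs then 1 else (0::real)) = (\<Prod>j<length xs. if xs ! j < din (v (take j xs)) then 1 else 0)"
  unfolding is_node_def by (induction xs rule: rev_induct)
    (auto simp: nth_append prod.lessThan_Suc take_Suc_conv_app_nth less_Suc_eq intro!: prod.cong)

lemma is_node_measurable:
  "{ys. length ys \<le> length xs} \<subseteq> J \<Longrightarrow>
    (\<lambda>v. if is_node v xs then 1 else (0::real)) \<in> borel_measurable (marks_space J)"
  unfolding indicator_is_node by (intro borel_measurable_prod measurable_mark_fun) auto

lemma is_node_sets:
  assumes "{ys. length ys \<le> length xs} \<subseteq> J"
  shows "{v \<in> space (marks_space J). is_node v xs} \<in> sets (marks_space J)"
proof -
  have "{v \<in> space (marks_space J). is_node v xs} =
      (\<lambda>v. if is_node v xs then 1 else (0::real)) -` {1} \<inter> space (marks_space J)"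
    by (auto split: if_splits)
  then show ?thesis using measurable_sets[OF is_node_measurable[OF assms]] by simp
qed

lemma slot_weight_measurable:
  assumes "{ys. length ys \<le> length xs} \<subseteq> J"
  shows "(\<lambda>v. slot_weight xs k v) \<in> borel_measurable (marks_space J)"
proof -
  have "slot_weight xs k v = (if is_node v xs then 1 else 0) * (if k < din (v xs) then 1 else 0) * path_weight v xs" for v
    unfolding slot_weight_def by auto
  then show ?thesis
    using assms by (simp only:) (intro borel_measurable_times is_node_measurable path_weight_measurable
      measurable_mark_fun[where f="\<lambda>i. if k < din i then 1 else 0"]; auto)
qed

text \<open>A sum over the nodes of generation \<open>t\<close> is the pointwise limit of the same sum over the
  finitely many candidate labels in \<open>words K t\<close>, as \<open>K \<longrightarrow> \<infinity>\<close>.\<close>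
lemma sum_nodes_measurable:
  assumes J: "{ys. length ys \<le> t} \<subseteq> J"
    and f: "\<And>xs. length xs = t \<Longrightarrow> (\<lambda>v. f v xs) \<in> borel_measurable (marks_space J)"
  shows "(\<lambda>v. \<Sum>xs\<in>nodes v t. f v xs :: real) \<in> borel_measurable (marks_space J)"
proof (rule borel_measurable_LIMSEQ_real)
  define S where "S K v = (\<Sum>xs\<in>words K t. (if is_node v xs then 1 else 0) * f v xs)" for K v
  show "S K \<in> borel_measurable (marks_space J)" for K
    unfolding S_def using J
    by (intro borel_measurable_sum borel_measurable_times is_node_measurable f) (auto simp: words_def)
  fix v
  define K0 where "K0 = Suc (Max (\<Union>xs\<in>nodes v t. set xs))"
  have "S K v = (\<Sum>xs\<in>nodes v t. f v xs)" if "K0 \<le> K" for K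
  proof -
    have "finite (\<Union>xs\<in>nodes v t. set xs)" using finite_nodes by auto
    then have "nodes v t \<subseteq> words K t"
      using that by (fastforce simp: words_def nodes_def K0_def dest: Max_ge)
    then have "{xs \<in> words K t. is_node v xs} = nodes v t" by (auto simp: nodes_def words_def)
    moreover have "S K v = (\<Sum>xs\<in>{xs \<in> words K t. is_node v xs}. f v xs)"
      unfolding S_def by (subst sum.inter_filter) (auto simp: finite_words intro!: sum.cong)
    ultimately show ?thesis by simp
  qed
  then show "(\<lambda>K. S K v) \<longlonglongrightarrow> (\<Sum>xs\<in>nodes v t. f v xs)"
    by (intro tendsto_eventually eventually_sequentiallyI[of K0]) auto
qed

lemma mass_measurable: "{ys. length ys \<le> t} \<subseteq> J \<Longrightarrow> mass t \<in> borel_measurable (marks_space J)"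
  unfolding mass_def[abs_def]
  by (intro sum_nodes_measurable borel_measurable_times path_weight_measurable measurable_mark_fun) auto

lemma sq_mass_measurable: "{ys. length ys \<le> t} \<subseteq> J \<Longrightarrow> sq_mass t \<in> borel_measurable (marks_space J)"
  unfolding sq_mass_def[abs_def]
  by (intro sum_nodes_measurable borel_measurable_times borel_measurable_power path_weight_measurable
      measurable_mark_fun) auto

end

section \<open>The branching process\<close>

locale branching_process = prob_space M + weighted_tree n m din dout
  for M :: "'a measure" and n m din dout +
  fixes mk :: "nat list \<Rightarrow> 'a \<Rightarrow> nat"
  assumes m_eq_sum_din: "m = (\<Sum>i\<in>{1..n}. din i)"
    and sum_dout_eq_m: "(\<Sum>i\<in>{1..n}. dout i) = m"
    and degrees_ge_2: "\<forall>i\<in>{1..n}. din i \<ge> 2 \<and> dout i \<ge> 2"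
    and indep: "indep_vars (\<lambda>_. count_space UNIV) mk UNIV"
    and marks_in_V: "\<forall>xs. AE w in M. mk xs w \<in> {1..n}"
    and root_law: "\<forall>i\<in>{1..n}. measure M {w \<in> space M. mk [] w = i} = 1 / real n"
    and child_law: "\<forall>xs i. xs \<noteq> [] \<longrightarrow> i \<in> {1..n} \<longrightarrow>
                      measure M {w \<in> space M. mk xs w = i} = real (dout i) / real m"
begin

definition \<rho> :: real where "\<rho> = (1 / real m) * (\<Sum>i\<in>{1..n}. real (din i) / real (dout i))"

definition \<gamma> :: real where "\<gamma> = (1 / real m) * (\<Sum>i\<in>{1..n}. real (din i) ^ 2 / real (dout i))"

definition dmax :: nat where "dmax = Max (din ` {1..n})"

abbreviation marks :: "'a \<Rightarrow> nat list \<Rightarrow> nat" where "marks w \<equiv> (\<lambda>xs. mk xs w)"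

definition marks_on :: "nat list set \<Rightarrow> 'a \<Rightarrow> nat list \<Rightarrow> nat" where
  "marks_on J w = restrict (marks w) J"

abbreviation labels_upto :: "nat \<Rightarrow> nat list set" where "labels_upto t \<equiv> {ys. length ys \<le> t}"

lemma n_pos: "n \<ge> 1"
proof (rule ccontr)
  assume "\<not> n \<ge> 1"
  then have "AE w in M. False" using marks_in_V by auto
  then show False by (simp add: AE_False)
qed

lemma m_pos: "real m > 0"
proof -
  have "(\<Sum>i\<in>{1..n}. 2) \<le> m" unfolding m_eq_sum_din using degrees_ge_2 by (intro sum_mono) auto
  then show ?thesis using n_pos by simp
qed

lemma dout_pos: "i \<in> {1..n} \<Longrightarrow> real (dout i) > 0"
  using degrees_ge_2 by force

lemma \<rho>_pos: "\<rho> > 0"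
proof -
  have "(\<Sum>i\<in>{1..n}. real (din i) / real (dout i)) > 0"
    using n_pos degrees_ge_2 dout_pos by (intro sum_pos divide_pos_pos) force+
  then show ?thesis unfolding \<rho>_def using m_pos by simp
qed

lemma \<rho>_less_1: "\<rho> < 1"
proof -
  have "(\<Sum>i\<in>{1..n}. real (din i) / real (dout i)) \<le> (\<Sum>i\<in>{1..n}. real (din i) / 2)"
    using degrees_ge_2 by (intro sum_mono divide_left_mono) force+
  also have "\<dots> = real m / 2" unfolding m_eq_sum_din by (simp add: sum_divide_distrib[symmetric])
  finally show ?thesis unfolding \<rho>_def using m_pos by (simp add: field_simps)
qed

lemma AE_din_le_dmax: "AE w in M. \<forall>ys. din (mk ys w) \<le> dmax"
proof -
  have "AE w in M. \<forall>xs. mk xs w \<in> {1..n}"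
    using marks_in_V by (subst AE_all_countable) auto
  then show ?thesis by eventually_elim (auto simp: dmax_def intro: Max_ge)
qed

lemma mk_measurable[measurable]: "mk xs \<in> measurable M (count_space UNIV)"
  using indep unfolding indep_vars_def by auto

lemma marks_on_measurable[measurable]: "marks_on J \<in> measurable M (marks_space J)"
  unfolding marks_on_def by (intro measurable_restrict) simp

lemma marks_on_UNIV: "marks_on UNIV = marks"
  by (auto simp: marks_on_def restrict_def)

lemma marks_on_labels_upto: "length ys \<le> t \<Longrightarrow> marks_on (labels_upto t) w ys = mk ys w"
  unfolding marks_on_def by simp

lemma mark_fun_measurable[measurable]: "(\<lambda>w. (f::nat \<Rightarrow> real) (mk xs w)) \<in> borel_measurable M"
  by (rule measurable_compose[OF mk_measurable]) simp

lemma AE_abs_mark_fun_le: "AE w in M. \<bar>(f::nat \<Rightarrow> real) (mk xs w)\<bar> \<le> (\<Sum>i\<in>{1..n}. \<bar>f i\<bar>)"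
  using marks_in_V[rule_format, of xs] by eventually_elim (rule member_le_sum, auto)

lemma integrable_mark_fun: "integrable M (\<lambda>w. (f::nat \<Rightarrow> real) (mk xs w))"
  by (rule integrable_const_bound[OF AE_abs_mark_fun_le[unfolded real_norm_def[symmetric]]]) simp

lemma integral_mark_fun:
  "(\<integral>w. (f::nat \<Rightarrow> real) (mk xs w) \<partial>M) = (\<Sum>i\<in>{1..n}. f i * measure M {w \<in> space M. mk xs w = i})"
proof -
  have sets: "{w \<in> space M. mk xs w = i} \<in> sets M" for i by measurable
  have "(\<integral>w. f (mk xs w) \<partial>M) = (\<integral>w. (\<Sum>i\<in>{1..n}. f i * indicator {w \<in> space M. mk xs w = i} w) \<partial>M)"
  proof (rule integral_cong_AE)
    show "AE w in M. f (mk xs w) = (\<Sum>i\<in>{1..n}. f i * indicator {w \<in> space M. mk xs w = i} w)"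
      using marks_in_V[rule_format, of xs] AE_space
      by eventually_elim (auto simp: indicator_def if_distrib sum.delta' cong: if_cong)
  qed (use sets in auto)
  also have "\<dots> = (\<Sum>i\<in>{1..n}. f i * measure M {w \<in> space M. mk xs w = i})"
    using sets by (subst Bochner_Integration.integral_sum) (auto intro!: integrable_real_indicator simp: less_top[symmetric])
  finally show ?thesis .
qed

lemma integral_child_mark_fun:
  "ys \<noteq> [] \<Longrightarrow> (\<integral>w. (f::nat \<Rightarrow> real) (mk ys w) \<partial>M) = (\<Sum>i\<in>{1..n}. f i * real (dout i) / real m)"
  unfolding integral_mark_fun using child_law by (intro sum.cong) auto

lemma integral_ratio_child: "ys \<noteq> [] \<Longrightarrow> (\<integral>w. ratio (mk ys w) - 1 \<partial>M) = 0"
proof -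
  assume ys: "ys \<noteq> []"
  have "(\<Sum>i\<in>{1..n}. ratio i * real (dout i) / real m) = (\<Sum>i\<in>{1..n}. real (din i)) / real m"
    using dout_pos by (simp add: ratio_def sum_divide_distrib)
  also have "\<dots> = 1" using m_pos by (simp add: m_eq_sum_din)
  finally show ?thesis
    using integral_child_mark_fun[OF ys, of ratio] integrable_mark_fun[of ratio ys] by (simp add: prob_space)
qed

lemma integral_ratio_child_square: "ys \<noteq> [] \<Longrightarrow> (\<integral>w. (ratio (mk ys w) - 1)^2 \<partial>M) = \<gamma> - 1"
proof -
  assume ys: "ys \<noteq> []"
  have sums_real: "(\<Sum>i\<in>{1..n}. real (din i)) = real m" "(\<Sum>i\<in>{1..n}. real (dout i)) = real m"
    using sum_dout_eq_m unfolding m_eq_sum_din by (simp_all flip: of_nat_sum)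
  have "(\<Sum>i\<in>{1..n}. (ratio i - 1)^2 * real (dout i) / real m) =
        (\<Sum>i\<in>{1..n}. real (din i) ^ 2 / real (dout i) / real m - 2 * (real (din i) / real m)
            + real (dout i) / real m)"
    using dout_pos m_pos by (intro sum.cong) (auto simp: ratio_def field_simps power2_eq_square)
  also have "\<dots> = (\<Sum>i\<in>{1..n}. real (din i) ^ 2 / real (dout i)) / real m
      - 2 * (\<Sum>i\<in>{1..n}. real (din i)) / real m + (\<Sum>i\<in>{1..n}. real (dout i)) / real m"
    by (simp add: sum.distrib sum_subtractf sum_divide_distrib sum_distrib_left)
  also have "\<dots> = \<gamma> - 1" unfolding \<gamma>_def sums_real using m_pos by simp
  finally show ?thesis using integral_child_mark_fun[OF ys, of "\<lambda>i. (ratio i - 1)^2"] by simp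
qed

lemma integral_sq_ratio_child: "ys \<noteq> [] \<Longrightarrow> (\<integral>w. sq_ratio (mk ys w) \<partial>M) = \<rho>"
proof -
  assume ys: "ys \<noteq> []"
  have "(\<Sum>i\<in>{1..n}. sq_ratio i * real (dout i) / real m) = \<rho>"
    using dout_pos unfolding \<rho>_def sum_distrib_left
    by (intro sum.cong) (auto simp: sq_ratio_def field_simps power2_eq_square)
  then show ?thesis using integral_child_mark_fun[OF ys, of sq_ratio] by simp
qed

lemma integral_din_root: "(\<integral>w. real (din (mk [] w)) \<partial>M) = real m / real n"
proof -
  have "(\<integral>w. real (din (mk [] w)) \<partial>M) = (\<Sum>i\<in>{1..n}. real (din i) / real n)"
    using integral_mark_fun[of "\<lambda>i. real (din i)" "[]"] root_law by simp
  then show ?thesis by (simp add: m_eq_sum_din sum_divide_distrib[symmetric])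
qed

lemma integrable_marks_on:
  "H \<in> borel_measurable (marks_space J) \<Longrightarrow> AE w in M. \<bar>H (marks_on J w)\<bar> \<le> B \<Longrightarrow>
    integrable M (\<lambda>w. H (marks_on J w) :: real)"
  by (intro integrable_const_bound[where B=B] measurable_compose[OF marks_on_measurable]) auto

text \<open>The mark of a label outside \<open>J\<close> is independent of the marks on \<open>J\<close>.\<close>
lemma integral_mult_fresh_mark:
  fixes H :: "(nat list \<Rightarrow> nat) \<Rightarrow> real" and f :: "nat \<Rightarrow> real"
  assumes y: "y \<notin> J" and H: "H \<in> borel_measurable (marks_space J)"
    and bdd: "AE w in M. \<bar>H (marks_on J w)\<bar> \<le> B"
  shows "integrable M (\<lambda>w. H (marks_on J w) * f (mk y w))"
    and "(\<integral>w. H (marks_on J w) * f (mk y w) \<partial>M) = (\<integral>w. H (marks_on J w) \<partial>M) * (\<integral>w. f (mk y w) \<partial>M)"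
proof -
  have "indep_var (marks_space J) (marks_on J) (marks_space {y}) (marks_on {y})"
    using indep_var_restrict[OF indep, of J "{y}"] y unfolding marks_on_def by auto
  from indep_var_compose[OF this H measurable_mark_fun[of y "{y}" f]]
  have ind: "indep_var borel (\<lambda>w. H (marks_on J w)) borel (\<lambda>w. f (mk y w))"
    by (simp add: comp_def marks_on_def)
  have "integrable M (\<lambda>w. H (marks_on J w))" by (rule integrable_marks_on[OF H bdd])
  from indep_var_integrable[OF ind this integrable_mark_fun] indep_var_lebesgue_integral[OF ind this integrable_mark_fun]
  show "integrable M (\<lambda>w. H (marks_on J w) * f (mk y w))"
    and "(\<integral>w. H (marks_on J w) * f (mk y w) \<partial>M) = (\<integral>w. H (marks_on J w) \<partial>M) * (\<integral>w. f (mk y w) \<partial>M)" .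
qed

abbreviation Mt :: "nat \<Rightarrow> 'a \<Rightarrow> real" where "Mt t w \<equiv> mass t (marks w)"

abbreviation dM :: "nat \<Rightarrow> 'a \<Rightarrow> real" where "dM t w \<equiv> Mt (Suc t) w - Mt t w"

lemma mass_marks_on: "t \<le> T \<Longrightarrow> mass t (marks_on (labels_upto T) w) = Mt t w"
  by (rule mass_cong) (simp add: marks_on_labels_upto)

lemma slot_weight_marks_on:
  "{ys. length ys \<le> length xs} \<subseteq> J \<Longrightarrow> slot_weight xs k (marks_on J w) = slot_weight xs k (marks w)"
  by (rule slot_weight_cong) (auto simp: marks_on_def)

lemma Mt_measurable[measurable]: "(\<lambda>w. Mt t w) \<in> borel_measurable M"
  using measurable_compose[OF marks_on_measurable mass_measurable[of t "labels_upto t"]]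
  by (simp add: mass_marks_on)

definition mass_bound :: "nat \<Rightarrow> real" where
  "mass_bound t = real (card (words dmax t)) * real dmax * (real n / real m)"

lemma AE_abs_Mt_le: "AE w in M. \<bar>Mt t w\<bar> \<le> mass_bound t"
  using AE_din_le_dmax by eventually_elim (unfold mass_bound_def, rule abs_mass_le, auto)

lemma AE_dM_eq_sum_words: "AE w in M. dM t w =
  (\<Sum>xs\<in>words dmax t. \<Sum>k<dmax. slot_weight xs k (marks_on (labels_upto t) w) * (ratio (mk (xs @ [k]) w) - 1))"
  using AE_din_le_dmax
proof eventually_elim
  case (elim w)
  show ?case unfolding mass_Suc_diff_eq_sum_words[OF elim[rule_format]]
    by (intro sum.cong refl) (simp add: slot_weight_marks_on words_def)
qed

text \<open>Each child slot of generation \<open>t\<close> carries a fresh mark whose \<open>ratio\<close> has mean \<open>1\<close>.\<close>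
lemma integral_mult_dM_eq_0:
  fixes H :: "(nat list \<Rightarrow> nat) \<Rightarrow> real"
  assumes H: "H \<in> borel_measurable (marks_space (labels_upto t))"
    and bdd: "AE w in M. \<bar>H (marks_on (labels_upto t) w)\<bar> \<le> B"
  shows "(\<integral>w. H (marks_on (labels_upto t) w) * dM t w \<partial>M) = 0"
proof -
  let ?J = "labels_upto t"
  define F where "F xs k w = (H (marks_on ?J w) * slot_weight xs k (marks_on ?J w)) * (ratio (mk (xs @ [k]) w) - 1)" for xs k w
  have HS: "(\<lambda>v. H v * slot_weight xs k v) \<in> borel_measurable (marks_space ?J)" if "xs \<in> words dmax t" for xs k
    using that by (intro borel_measurable_times H slot_weight_measurable) (auto simp: words_def)
  have HS_bdd: "AE w in M. \<bar>H (marks_on ?J w) * slot_weight xs k (marks_on ?J w)\<bar> \<le> B * (real n / real m)" for xs k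
    using bdd
  proof eventually_elim
    case (elim w)
    show ?case unfolding abs_mult by (rule mult_mono[OF elim abs_slot_weight_le]) (use elim in auto)
  qed
  have fresh: "xs @ [k] \<notin> ?J" if "xs \<in> words dmax t" for xs k using that by (auto simp: words_def)
  note F_fresh = integral_mult_fresh_mark[where f="\<lambda>i. ratio i - 1", OF fresh HS HS_bdd]
  have "(\<integral>w. H (marks_on ?J w) * dM t w \<partial>M) = (\<integral>w. (\<Sum>xs\<in>words dmax t. \<Sum>k<dmax. F xs k w) \<partial>M)"
  proof (rule integral_cong_AE)
    show "(\<lambda>w. \<Sum>xs\<in>words dmax t. \<Sum>k<dmax. F xs k w) \<in> borel_measurable M"
      using F_fresh(1) by (intro borel_measurable_sum) (auto simp: F_def)
    show "AE w in M. H (marks_on ?J w) * dM t w = (\<Sum>xs\<in>words dmax t. \<Sum>k<dmax. F xs k w)"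
      using AE_dM_eq_sum_words[of t] by eventually_elim (simp add: F_def sum_distrib_left mult.assoc)
  qed (use H in measurable)
  also have "\<dots> = 0"
    using F_fresh integral_ratio_child by (simp add: integral_sum_sum finite_words F_def)
  finally show ?thesis .
qed

definition Q :: "nat \<Rightarrow> real" where "Q t = (\<integral>w. sq_mass t (marks w) \<partial>M)"

lemma integrable_slot_weight_square:
  "length xs \<le> t \<Longrightarrow> integrable M (\<lambda>w. (slot_weight xs k (marks_on (labels_upto t) w))^2)"
  using slot_weight_square_le
  by (intro integrable_marks_on[where H="\<lambda>v. (slot_weight xs k v)^2"] borel_measurable_power
      slot_weight_measurable) auto

lemma Q_eq_sum_words:
  "Q t = (\<Sum>xs\<in>words dmax t. \<Sum>k<dmax. \<integral>w. (slot_weight xs k (marks_on (labels_upto t) w))^2 \<partial>M)"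
proof -
  have "Q t = (\<integral>w. (\<Sum>xs\<in>words dmax t. \<Sum>k<dmax. (slot_weight xs k (marks_on (labels_upto t) w))^2) \<partial>M)"
    unfolding Q_def
  proof (rule integral_cong_AE)
    show "(\<lambda>w. sq_mass t (marks w)) \<in> borel_measurable M"
      using measurable_compose[OF marks_on_measurable sq_mass_measurable[of t UNIV]] by (simp add: marks_on_UNIV)
    show "AE w in M. sq_mass t (marks w) =
        (\<Sum>xs\<in>words dmax t. \<Sum>k<dmax. (slot_weight xs k (marks_on (labels_upto t) w))^2)"
      using AE_din_le_dmax
    proof eventually_elim
      case (elim w)
      show ?case unfolding sq_mass_eq_sum_words[OF elim[rule_format]]
        by (intro sum.cong refl) (simp add: slot_weight_marks_on words_def)
    qed
  qed (use integrable_slot_weight_square in \<open>auto simp: words_def\<close>)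
  then show ?thesis
    using integrable_slot_weight_square by (simp add: integral_sum_sum finite_words words_def)
qed

lemma Q_0: "Q 0 = real n / real m"
proof -
  have "Q 0 = (\<integral>w. (real n / real m)^2 * real (din (mk [] w)) \<partial>M)"
    unfolding Q_def by (simp add: sq_mass_def nodes_0 path_weight_def mult.commute)
  also have "\<dots> = real n / real m"
    using integral_din_root n_pos m_pos by (simp add: power2_eq_square)
  finally show ?thesis .
qed

lemma Q_Suc: "Q (Suc t) = \<rho> * Q t"
proof -
  let ?s = "\<lambda>xs k w. slot_weight xs k (marks_on (labels_upto t) w)"
  have int: "integrable M (\<lambda>w. (?s xs k w)^2 * sq_ratio (mk (xs @ [k]) w))"
    and factor: "(\<integral>w. (?s xs k w)^2 * sq_ratio (mk (xs @ [k]) w) \<partial>M) = (\<integral>w. (?s xs k w)^2 \<partial>M) * \<rho>"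
    if "xs \<in> words dmax t" for xs k
  proof -
    have "xs @ [k] \<notin> labels_upto t" "{ys. length ys \<le> length xs} \<subseteq> labels_upto t"
      and "AE w in M. \<bar>(?s xs k w)^2\<bar> \<le> (real n / real m)^2"
      using that slot_weight_square_le by (auto simp: words_def)
    note fresh = integral_mult_fresh_mark[where H="\<lambda>v. (slot_weight xs k v)^2" and f=sq_ratio,
        OF this(1) borel_measurable_power[OF slot_weight_measurable[OF this(2)]] this(3)]
    show "integrable M (\<lambda>w. (?s xs k w)^2 * sq_ratio (mk (xs @ [k]) w))"
      by (rule fresh(1))
    show "(\<integral>w. (?s xs k w)^2 * sq_ratio (mk (xs @ [k]) w) \<partial>M) = (\<integral>w. (?s xs k w)^2 \<partial>M) * \<rho>"
      using fresh(2) integral_sq_ratio_child by simp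
  qed
  have "Q (Suc t) = (\<integral>w. (\<Sum>xs\<in>words dmax t. \<Sum>k<dmax. (?s xs k w)^2 * sq_ratio (mk (xs @ [k]) w)) \<partial>M)"
    unfolding Q_def
  proof (rule integral_cong_AE)
    show "(\<lambda>w. sq_mass (Suc t) (marks w)) \<in> borel_measurable M"
      using measurable_compose[OF marks_on_measurable sq_mass_measurable[of "Suc t" UNIV]] by (simp add: marks_on_UNIV)
    show "AE w in M. sq_mass (Suc t) (marks w) =
        (\<Sum>xs\<in>words dmax t. \<Sum>k<dmax. (?s xs k w)^2 * sq_ratio (mk (xs @ [k]) w))"
      using AE_din_le_dmax
    proof eventually_elim
      case (elim w)
      show ?case unfolding sq_mass_Suc_eq_sum_words[OF elim[rule_format]]
        by (intro sum.cong refl) (simp add: slot_weight_marks_on words_def)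
    qed
  qed (use int in \<open>auto intro!: borel_measurable_sum\<close>)
  also have "\<dots> = (\<Sum>xs\<in>words dmax t. \<Sum>k<dmax. (\<integral>w. (?s xs k w)^2 \<partial>M) * \<rho>)"
    using int factor by (simp add: integral_sum_sum finite_words)
  also have "\<dots> = \<rho> * Q t"
    unfolding Q_eq_sum_words by (simp add: sum_distrib_left sum_distrib_right mult.commute)
  finally show ?thesis .
qed

lemma Q_eq: "Q t = real n / real m * \<rho> ^ t"
  by (induction t) (simp_all add: Q_0 Q_Suc)

definition increment_term :: "nat \<Rightarrow> nat list \<times> nat \<Rightarrow> 'a \<Rightarrow> real" where
  "increment_term t p w =
     slot_weight (fst p) (snd p) (marks_on (labels_upto t) w) * (ratio (mk (fst p @ [snd p]) w) - 1)"

lemma increment_terms_orthogonal: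
  assumes p: "p \<in> words dmax t \<times> {..<dmax}" and r: "r \<in> words dmax t \<times> {..<dmax}" and "p \<noteq> r"
  shows "integrable M (\<lambda>w. increment_term t p w * increment_term t r w)"
    and "(\<integral>w. increment_term t p w * increment_term t r w \<partial>M) = 0"
proof -
  obtain xs k xs' k' where pr: "p = (xs, k)" "r = (xs', k')" by (cases p, cases r)
  have len: "length xs = t" "length xs' = t" using p r pr by (auto simp: words_def)
  let ?J = "insert (xs @ [k]) (labels_upto t)"
  define H where "H v = slot_weight xs k v * slot_weight xs' k' v * (ratio (v (xs @ [k])) - 1)" for v
  have H_meas: "H \<in> borel_measurable (marks_space ?J)" unfolding H_def
    by (intro borel_measurable_times slot_weight_measurable measurable_mark_fun[where f="\<lambda>i. ratio i - 1"])
      (use len in auto)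
  have H_eq: "H (marks_on ?J w) =
      slot_weight xs k (marks w) * slot_weight xs' k' (marks w) * (ratio (mk (xs @ [k]) w) - 1)" for w
  proof -
    have "{ys. length ys \<le> length xs} \<subseteq> ?J" "{ys. length ys \<le> length xs'} \<subseteq> ?J"
      using len by auto
    then show ?thesis unfolding H_def by (simp add: slot_weight_marks_on) (simp add: marks_on_def)
  qed
  have H_bdd: "AE w in M. \<bar>H (marks_on ?J w)\<bar> \<le>
      (real n / real m) * (real n / real m) * ((\<Sum>i\<in>{1..n}. \<bar>ratio i - 1\<bar>))"
    using AE_abs_mark_fun_le[of "\<lambda>i. ratio i - 1" "xs @ [k]"]
    by eventually_elim (unfold H_eq abs_mult, intro mult_mono abs_slot_weight_le, auto)
  have "xs' @ [k'] \<notin> ?J" using \<open>p \<noteq> r\<close> len pr by auto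
  note fresh = integral_mult_fresh_mark[where f="\<lambda>i. ratio i - 1", OF this H_meas H_bdd]
  have "increment_term t p w * increment_term t r w = H (marks_on ?J w) * (ratio (mk (xs' @ [k']) w) - 1)" for w
    unfolding H_eq increment_term_def pr using len by (simp add: slot_weight_marks_on)
  then show "integrable M (\<lambda>w. increment_term t p w * increment_term t r w)"
    and "(\<integral>w. increment_term t p w * increment_term t r w \<partial>M) = 0"
    using fresh integral_ratio_child[of "xs' @ [k']"] by simp_all
qed

lemma increment_term_square:
  assumes p: "p \<in> words dmax t \<times> {..<dmax}"
  shows "integrable M (\<lambda>w. increment_term t p w * increment_term t p w)"
    and "(\<integral>w. (increment_term t p w)^2 \<partial>M) =
      (\<gamma> - 1) * (\<integral>w. (slot_weight (fst p) (snd p) (marks_on (labels_upto t) w))^2 \<partial>M)"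
proof -
  obtain xs k where pe: "p = (xs, k)" by (cases p)
  have len: "length xs = t" using p pe by (auto simp: words_def)
  have "xs @ [k] \<notin> labels_upto t" "{ys. length ys \<le> length xs} \<subseteq> labels_upto t"
    and "AE w in M. \<bar>(slot_weight xs k (marks_on (labels_upto t) w))^2\<bar> \<le> (real n / real m)^2"
    using len slot_weight_square_le by auto
  note fresh = integral_mult_fresh_mark[where H="\<lambda>v. (slot_weight xs k v)^2" and f="\<lambda>i. (ratio i - 1)^2",
      OF this(1) borel_measurable_power[OF slot_weight_measurable[OF this(2)]] this(3)]
  have "increment_term t p w * increment_term t p w =
      (slot_weight xs k (marks_on (labels_upto t) w))^2 * (ratio (mk (xs @ [k]) w) - 1)^2" for w
    unfolding increment_term_def pe by (simp add: power2_eq_square)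
  then show "integrable M (\<lambda>w. increment_term t p w * increment_term t p w)"
    and "(\<integral>w. (increment_term t p w)^2 \<partial>M) =
      (\<gamma> - 1) * (\<integral>w. (slot_weight (fst p) (snd p) (marks_on (labels_upto t) w))^2 \<partial>M)"
    using fresh integral_ratio_child_square[of "xs @ [k]"] pe by (simp_all add: power2_eq_square)
qed

lemma integral_dM_square: "(\<integral>w. (dM t w)^2 \<partial>M) = (\<gamma> - 1) * (real n / real m) * \<rho> ^ t"
proof -
  let ?P = "words dmax t \<times> {..<dmax}"
  have "(\<integral>w. (dM t w)^2 \<partial>M) = (\<integral>w. (\<Sum>p\<in>?P. increment_term t p w)^2 \<partial>M)"
  proof (rule integral_cong_AE)
    show "(\<lambda>w. (\<Sum>p\<in>?P. increment_term t p w)^2) \<in> borel_measurable M"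
      unfolding increment_term_def
      by (intro borel_measurable_power borel_measurable_sum borel_measurable_times borel_measurable_diff
          measurable_compose[OF marks_on_measurable slot_weight_measurable] mark_fun_measurable)
        (auto simp: words_def)
    show "AE w in M. (dM t w)^2 = (\<Sum>p\<in>?P. increment_term t p w)^2"
      using AE_dM_eq_sum_words[of t]
      by eventually_elim (simp add: increment_term_def sum.cartesian_product split_def)
  qed simp
  also have "\<dots> = (\<Sum>p\<in>?P. \<integral>w. (increment_term t p w)^2 \<partial>M)"
    using increment_terms_orthogonal increment_term_square(1)
    by (intro integral_square_sum_orthogonal) (auto simp: finite_words, metis)
  also have "\<dots> = (\<Sum>p\<in>?P. (\<gamma> - 1) * (\<integral>w. (slot_weight (fst p) (snd p) (marks_on (labels_upto t) w))^2 \<partial>M))"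
    by (intro sum.cong refl increment_term_square(2))
  also have "\<dots> = (\<gamma> - 1) * Q t"
    unfolding Q_eq_sum_words by (simp add: sum_distrib_left sum.cartesian_product split_def)
  finally show ?thesis by (simp add: Q_eq)
qed

section \<open>Convergence\<close>

definition tail_variance :: "nat \<Rightarrow> real" where
  "tail_variance t = (\<gamma> - 1) * (real n / real m) * \<rho> ^ t / (1 - \<rho>)"

lemma tail_variance_diff:
  assumes "t \<le> T"
  shows "tail_variance t - tail_variance T = (\<Sum>s\<in>{t..<T}. (\<gamma> - 1) * (real n / real m) * \<rho> ^ s)"
proof -
  define c where "c = (\<gamma> - 1) * (real n / real m)"
  have "c * \<rho> ^ t / (1 - \<rho>) - c * \<rho> ^ T / (1 - \<rho>) = (\<Sum>s\<in>{t..<T}. c * \<rho> ^ s)"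
    using assms
  proof (induction T rule: dec_induct)
    case (step T)
    have "c * \<rho> ^ T - c * \<rho> ^ Suc T = c * \<rho> ^ T * (1 - \<rho>)" by (simp add: algebra_simps)
    then have "c * \<rho> ^ T / (1 - \<rho>) - c * \<rho> ^ Suc T / (1 - \<rho>) = c * \<rho> ^ T"
      using \<rho>_less_1 by (simp add: diff_divide_distrib[symmetric])
    then show ?case using step.IH step.hyps by simp
  qed simp
  then show ?thesis by (simp add: tail_variance_def c_def)
qed

lemma integral_Mt_diff_square:
  "t \<le> T \<Longrightarrow> (\<integral>w. (Mt T w - Mt t w)^2 \<partial>M) = tail_variance t - tail_variance T"
proof -
  assume "t \<le> T"
  have orth: "(\<integral>w. (Mt T w - Mt t w) * dM T w \<partial>M) = 0" if "t \<le> T" for t T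
  proof -
    have "(\<lambda>v. mass T v - mass t v) \<in> borel_measurable (marks_space (labels_upto T))"
      using that by (intro borel_measurable_diff mass_measurable) auto
    moreover have "AE w in M. \<bar>mass T (marks_on (labels_upto T) w) - mass t (marks_on (labels_upto T) w)\<bar>
        \<le> mass_bound T + mass_bound t"
      using AE_abs_Mt_le[of T] AE_abs_Mt_le[of t]
      by eventually_elim (use that in \<open>auto simp: mass_marks_on\<close>)
    ultimately have "(\<integral>w. (mass T (marks_on (labels_upto T) w) - mass t (marks_on (labels_upto T) w)) * dM T w \<partial>M) = 0"
      by (rule integral_mult_dM_eq_0)
    then show ?thesis using that by (simp add: mass_marks_on)
  qed
  show ?thesis
    using integral_square_telescope[where X="\<lambda>t w. Mt t w" and B=mass_bound, OF Mt_measurable AE_abs_Mt_le orth \<open>t \<le> T\<close>]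
    by (simp add: integral_dM_square tail_variance_diff[OF \<open>t \<le> T\<close>])
qed

lemma integrable_Mt_diff_square: "integrable M (\<lambda>w. (Mt T w - Mt t w)^2)"
  unfolding power2_eq_square
  using AE_abs_Mt_le[of T] AE_abs_Mt_le[of t]
  by (intro integrable_mult_of_bounded[where A="mass_bound T + mass_bound t" and B="mass_bound T + mass_bound t"])
    (auto elim: eventually_mono[OF eventually_conj] simp del: eventually_conj_iff)

lemma AE_Mt_convergent: "AE w in M. convergent (\<lambda>t. Mt t w)"
proof -
  have "AE w in M. summable (\<lambda>t. \<bar>dM t w\<bar>)"
    using integrable_Mt_diff_square \<rho>_pos \<rho>_less_1
    by (intro AE_summable_abs_of_geometric_square_integrals[where C="(\<gamma> - 1) * (real n / real m)"])
      (auto simp: integral_dM_square)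
  then show ?thesis by eventually_elim (rule convergent_of_summable_abs_diff)
qed

definition Mstar :: "'a \<Rightarrow> real" where "Mstar w = lim (\<lambda>t. Mt t w)"

lemma Mstar_measurable: "Mstar \<in> borel_measurable M"
  unfolding Mstar_def by (rule borel_measurable_lim_metric) simp

lemma AE_Mt_tendsto_Mstar: "AE w in M. (\<lambda>t. Mt t w) \<longlonglongrightarrow> Mstar w"
  using AE_Mt_convergent by eventually_elim (simp add: Mstar_def convergent_LIMSEQ_iff)

lemma tail_variance_tendsto_0: "tail_variance \<longlonglongrightarrow> 0"
  unfolding tail_variance_def using \<rho>_pos \<rho>_less_1 m_pos
  by (auto intro!: tendsto_eq_intros LIMSEQ_power_zero)

lemma Mstar_L2:
  shows "integrable M (\<lambda>w. (Mstar w - Mt t w)^2)"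
    and "(\<integral>w. (Mstar w - Mt t w)^2 \<partial>M) = tail_variance t"
proof -
  note L2 = square_integral_limit[OF Mt_measurable Mstar_measurable AE_Mt_tendsto_Mstar
      integrable_Mt_diff_square _ tail_variance_tendsto_0]
  show "integrable M (\<lambda>w. (Mstar w - Mt t w)^2)" by (rule L2(1)) (rule integral_Mt_diff_square)
  show "(\<integral>w. (Mstar w - Mt t w)^2 \<partial>M) = tail_variance t" by (rule L2(2)) (rule integral_Mt_diff_square)
qed

lemma integrable_Mstar_square: "integrable M (\<lambda>w. (Mstar w)^2)"
  using AE_abs_Mt_le[of 0]
  by (intro integrable_square_of_square_diff[OF Mstar_measurable Mstar_L2(1)[of 0]])
    (simp add: power2_eq_square integrable_mult_of_bounded)

lemma weight_eq_path_weight: "weight n m din dout mk xs w = real (din (mk xs w)) * path_weight (marks w) xs"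
  unfolding Defs.weight_def path_weight_def by simp

section \<open>The natural filtration\<close>

lemma Mproc_eq_Mt: "Mproc n m din dout mk = (\<lambda>t w. Mt t w)"
  unfolding Mproc_def[abs_def] mass_def generation_def nodes_def in_tree_def is_node_def
    weight_eq_path_weight by simp

abbreviation filt :: "nat \<Rightarrow> 'a measure" where "filt t \<equiv> nat_filtration M din mk t"

definition observe :: "nat \<Rightarrow> nat list \<Rightarrow> (nat list \<Rightarrow> nat) \<Rightarrow> nat option" where
  "observe t xs v = (if length xs \<le> t \<and> is_node v xs then Some (v xs) else None)"

definition obs_events :: "nat \<Rightarrow> 'a set set" where
  "obs_events t = {{w \<in> space M. obs din mk t xs w = u} | xs u. True}"

lemma obs_eq_observe: "obs din mk t xs w = observe t xs (marks_on (labels_upto t) w)"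
proof (cases "length xs \<le> t")
  case True
  then have "is_node (marks_on (labels_upto t) w) xs = is_node (marks w) xs"
    by (intro is_node_cong) (simp add: marks_on_labels_upto)
  then show ?thesis using True
    unfolding obs_def observe_def in_tree_def is_node_def by (simp add: marks_on_labels_upto)
qed (simp add: obs_def observe_def)

lemma observe_measurable: "observe t xs \<in> measurable (marks_space (labels_upto t)) (count_space UNIV)"
proof (cases "length xs \<le> t")
  case True
  have "(\<lambda>v. if is_node v xs then Some (v xs) else None) \<in> measurable (marks_space (labels_upto t)) (count_space UNIV)"
  proof (rule measurable_If[OF _ _ is_node_sets])
    show "(\<lambda>v. Some (v xs)) \<in> measurable (marks_space (labels_upto t)) (count_space UNIV)"
      by (rule measurable_compose[OF measurable_component_singleton]) (use True in auto)
  qed (use True in auto)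
  then show ?thesis unfolding observe_def using True by simp
next
  case False
  then have "observe t xs = (\<lambda>v. None)" by (auto simp: observe_def)
  then show ?thesis by simp
qed

lemma space_filt: "space (filt t) = space M"
  unfolding nat_filtration_def by (subst space_measure_of) auto

lemma sets_filt: "sets (filt t) = sigma_sets (space M) (obs_events t)"
  unfolding nat_filtration_def obs_events_def by (subst sets_measure_of) auto

lemma obs_events_sets: "obs_events t \<subseteq> sets M"
proof
  fix A assume "A \<in> obs_events t"
  then obtain xs u where "A = obs din mk t xs -` {u} \<inter> space M" unfolding obs_events_def by blast
  moreover have "obs din mk t xs \<in> measurable M (count_space UNIV)"
    unfolding obs_eq_observe[abs_def] by (rule measurable_compose[OF marks_on_measurable observe_measurable])
  ultimately show "A \<in> sets M" by (simp add: measurable_sets)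
qed

lemma subalgebra_filt: "subalgebra M (filt t)"
  unfolding subalgebra_def space_filt sets_filt by (simp add: sets.sigma_sets_subset obs_events_sets)

lemma sets_filt_mono: "s \<le> t \<Longrightarrow> sets (filt s) \<subseteq> sets (filt t)"
proof -
  assume "s \<le> t"
  have "obs_events s \<subseteq> sets (filt t)"
  proof
    fix A assume "A \<in> obs_events s"
    then obtain xs u where A: "A = {w \<in> space M. obs din mk s xs w = u}" unfolding obs_events_def by auto
    show "A \<in> sets (filt t)"
    proof (cases "length xs \<le> s")
      case True
      then have "A = {w \<in> space M. obs din mk t xs w = u}" unfolding A obs_def using \<open>s \<le> t\<close> by auto
      then show ?thesis unfolding sets_filt obs_events_def by (intro sigma_sets.Basic) blast
    next
      case False
      then have "A = (if u = None then space M else {})" unfolding A obs_def by auto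
      then show ?thesis using sets.top[of "filt t"] unfolding space_filt by auto
    qed
  qed
  then show ?thesis unfolding sets_filt[of s]
    using sets.sigma_sets_subset[of "obs_events s" "filt t"] unfolding space_filt by simp
qed

lemma obs_measurable_filt: "obs din mk t xs \<in> measurable (filt t) (count_space UNIV)"
proof (subst measurable_count_space_eq2_countable, safe)
  fix u
  have "obs din mk t xs -` {u} \<inter> space (filt t) = {w \<in> space M. obs din mk t xs w = u}"
    unfolding space_filt by auto
  also have "\<dots> \<in> sets (filt t)" unfolding sets_filt obs_events_def by (intro sigma_sets.Basic) blast
  finally show "obs din mk t xs -` {u} \<inter> space (filt t) \<in> sets (filt t)" .
qed simp

lemma Mt_adapted: "(\<lambda>w. Mt t w) \<in> borel_measurable (filt t)"
proof -
  define seen where "seen w xs = (case obs din mk t xs w of Some i \<Rightarrow> i | None \<Rightarrow> 0)" for w xs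
  have "seen w = (\<lambda>ys. if length ys \<le> t \<and> is_node (marks w) ys then mk ys w else 0)" for w
    unfolding seen_def obs_def in_tree_def is_node_def by (rule ext) auto
  then have "Mt t w = mass t (seen w)" for w by (simp add: mass_restrict_tree)
  moreover have "seen \<in> measurable (filt t) (marks_space UNIV)"
    unfolding seen_def by (intro measurable_PiM_single' measurable_compose[OF obs_measurable_filt]) auto
  ultimately show ?thesis using measurable_compose[OF _ mass_measurable[of t UNIV]] by auto
qed

lemma sets_filt_vimage:
  assumes "A \<in> sets (filt t)"
  shows "\<exists>B\<in>sets (marks_space (labels_upto t)). A = marks_on (labels_upto t) -` B \<inter> space M"
proof -
  let ?V = "vimage_algebra (space M) (marks_on (labels_upto t)) (marks_space (labels_upto t))"
  have space: "marks_on (labels_upto t) w \<in> space (marks_space (labels_upto t))" if "w \<in> space M" for w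
    using measurable_space[OF marks_on_measurable that] .
  then have sets_V: "sets ?V = {marks_on (labels_upto t) -` B \<inter> space M | B. B \<in> sets (marks_space (labels_upto t))}"
    by (intro sets_vimage_algebra2) auto
  have "obs_events t \<subseteq> sets ?V"
  proof
    fix A assume "A \<in> obs_events t"
    then obtain xs u where A: "A = {w \<in> space M. obs din mk t xs w = u}" unfolding obs_events_def by auto
    have "A = marks_on (labels_upto t) -` (observe t xs -` {u} \<inter> space (marks_space (labels_upto t))) \<inter> space M"
      unfolding A obs_eq_observe using space by auto
    moreover have "observe t xs -` {u} \<inter> space (marks_space (labels_upto t)) \<in> sets (marks_space (labels_upto t))"
      by (rule measurable_sets[OF observe_measurable]) simp
    ultimately show "A \<in> sets ?V" unfolding sets_V by blast
  qed
  then have "sigma_sets (space M) (obs_events t) \<subseteq> sets ?V"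
    using sets.sigma_sets_subset[of "obs_events t" ?V] by simp
  then show ?thesis using assms unfolding sets_filt sets_V by blast
qed

lemma integral_indicator_mult_dM_eq_0:
  assumes "A \<in> sets (filt t)"
  shows "(\<integral>w. indicator A w * dM t w \<partial>M) = 0"
proof -
  obtain B where B: "B \<in> sets (marks_space (labels_upto t))" and A: "A = marks_on (labels_upto t) -` B \<inter> space M"
    using sets_filt_vimage[OF assms] by blast
  have "(\<integral>w. indicator A w * dM t w \<partial>M) = (\<integral>w. indicator B (marks_on (labels_upto t) w) * dM t w \<partial>M)"
    by (rule Bochner_Integration.integral_cong) (auto simp: A indicator_def)
  also have "\<dots> = 0"
    using B by (intro integral_mult_dM_eq_0[where B=1]) (auto simp: indicator_def)
  finally show ?thesis .
qed

lemma martingale_Mt: "martingale M filt (\<lambda>t w. Mt t w)"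
  using AE_abs_Mt_le
  by (intro martingaleI_orthogonal_increments subalgebra_filt sets_filt_mono Mt_adapted
      integral_indicator_mult_dM_eq_0 integrable_const_bound[where B="mass_bound t" for t]) auto

end

theorem proposition7:
  fixes n :: nat and din dout :: "nat \<Rightarrow> nat"
    and M :: "'a measure" and mk :: "nat list \<Rightarrow> 'a \<Rightarrow> nat"
  defines "m \<equiv> (\<Sum>i\<in>{1..n}. din i)"
  defines "\<rho> \<equiv> (1 / real m) * (\<Sum>i\<in>{1..n}. real (din i) / real (dout i))"
  defines "\<gamma> \<equiv> (1 / real m) * (\<Sum>i\<in>{1..n}. real (din i) ^ 2 / real (dout i))"
  assumes sums: "(\<Sum>i\<in>{1..n}. dout i) = m"
    and degs: "\<forall>i\<in>{1..n}. din i \<ge> 2 \<and> dout i \<ge> 2"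
    and P: "prob_space M"
    and indep: "prob_space.indep_vars M (\<lambda>_. count_space UNIV) mk UNIV"
    and marks_in_V: "\<forall>xs. AE w in M. mk xs w \<in> {1..n}"
    and root_law: "\<forall>i\<in>{1..n}. measure M {w \<in> space M. mk [] w = i} = 1 / real n"
    and child_law: "\<forall>xs i. xs \<noteq> [] \<longrightarrow> i \<in> {1..n} \<longrightarrow>
                      measure M {w \<in> space M. mk xs w = i} = real (dout i) / real m"
  shows "martingale M (nat_filtration M din mk) (Mproc n m din dout mk) \<and>
    (\<exists>Mstar. Mstar \<in> borel_measurable M \<and>
       (AE w in M. (\<lambda>t. Mproc n m din dout mk t w) \<longlonglongrightarrow> Mstar w) \<and>
       integrable M (\<lambda>w. (Mstar w)^2) \<and>
       (\<forall>t. integrable M (\<lambda>w. (Mstar w - Mproc n m din dout mk t w)^2)) \<and>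
       ((\<lambda>t. \<integral>w. (Mstar w - Mproc n m din dout mk t w)^2 \<partial>M) \<longlonglongrightarrow> 0) \<and>
       (\<forall>t. (\<integral>w. (Mstar w - Mproc n m din dout mk t w)^2 \<partial>M)
              = real n * (\<gamma> - 1) * \<rho> ^ t / (real m * (1 - \<rho>))))"
proof -
  interpret B: branching_process M n m din dout mk
    using P sums degs indep marks_in_V root_law child_law
    by (intro branching_process.intro branching_process_axioms.intro) (simp_all add: m_def)
  have "\<rho> = B.\<rho>" "\<gamma> = B.\<gamma>" unfolding \<rho>_def \<gamma>_def B.\<rho>_def B.\<gamma>_def by simp_all
  then have tail: "B.tail_variance t = real n * (\<gamma> - 1) * \<rho> ^ t / (real m * (1 - \<rho>))" for t
    by (simp add: B.tail_variance_def)
  show ?thesis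
    unfolding B.Mproc_eq_Mt tail[symmetric]
    using B.martingale_Mt B.Mstar_measurable B.AE_Mt_tendsto_Mstar B.integrable_Mstar_square B.Mstar_L2
      B.tail_variance_tendsto_0
    by (intro conjI exI[of _ B.Mstar]) auto
qed

end
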